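(* Let $y>0$ and $\mathscr{C}_n(y)=\displaystyle\int_0^y\frac{t\sinh t}{t^2+\pi^2n^2}\,dt$ for $n\in\mathbb{Z}$. Then the discrete Hilbert transform of $(\mathscr{C}_n(y))_{n\in\mathbb{Z}}$, i.e. the sequence $\frac{1}{\pi}\sum_{m\in\mathbb{Z}\setminus\{0\}}\frac{\mathscr{C}_{n-m}(y)}{m}$, is given by \[ \mathscr{D}_n(y)=\frac{1}{\pi n}\Bigl(\sinh y-\frac{y^2\sinh y}{y^2+\pi^2n^2}\Bigr)\quad(n\neq0),\qquad \mathscr{D}_0(y)=0. \] *)

theory Defs
  imports "HOL-Analysis.Analysis"
begin

definition calC :: "int \<Rightarrow> real \<Rightarrow> real" where
  "calC n y = integral {0..y} (\<lambda>t. t * sinh t / (t\<^sup>2 + pi\<^sup>2 * (of_int n)\<^sup>2))"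

definition calD :: "int \<Rightarrow> real \<Rightarrow> real" where
  "calD n y = (if n = 0 then 0 else
     (1 / (pi * of_int n)) * (sinh y - y\<^sup>2 * sinh y / (y\<^sup>2 + pi\<^sup>2 * (of_int n)\<^sup>2)))"

end

theory Submission
  imports Defs "HOL-Real_Asymp.Real_Asymp"
begin

(*
  Pair the terms m and -m of the transform. Since C_k(y) is the integral over [0, y] of
  t sinh t L_t(k) with L_t(x) = 1 / (t^2 + pi^2 x^2), the pair contributes the integral of
  t sinh t (L_t(n - m) - L_t(n + m)) / m. A partial fraction identity rewrites this quotient
  through the symmetric sums L_t(n - m) + L_t(n + m) and the same sums for x L_t(x). Summed
  over m >= 1, the former is the Mittag-Leffler expansion of coth t / t (obtained from the
  reflection formula of the digamma function at i t / pi), and the latter telescopes because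
  x L_t(x) is odd. The result is pi times the t-derivative of D_n(t) = pi n sinh t L_t(n).
  Uniformly on [0, y] the pair integrands are bounded by a summable sequence, so summation and
  integration commute, and the fundamental theorem of calculus gives D_n(y).
*)

section \<open>The partial fraction expansion of \<open>coth\<close>\<close>

definition lorentzian :: "real \<Rightarrow> real \<Rightarrow> real" where
  "lorentzian t x = 1 / (t\<^sup>2 + pi\<^sup>2 * x\<^sup>2)"

lemma lorentzian_denominator_pos: "t \<noteq> 0 \<or> x \<noteq> 0 \<Longrightarrow> t\<^sup>2 + pi\<^sup>2 * x\<^sup>2 > 0"
  by (auto intro: add_pos_nonneg add_nonneg_pos)

lemma lorentzian_minus [simp]: "lorentzian t (- x) = lorentzian t x"
  by (simp add: lorentzian_def)

lemma lorentzian_nonneg: "lorentzian t x \<ge> 0"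
  by (simp add: lorentzian_def)

lemma sinh_of_real: "sinh (complex_of_real x) = of_real (sinh x)"
  by (simp add: sinh_field_def exp_of_real[symmetric])

lemma cosh_of_real: "cosh (complex_of_real x) = of_real (cosh x)"
  by (simp add: cosh_field_def exp_of_real[symmetric])

lemma Digamma_reflection:
  fixes z :: complex
  assumes "z \<notin> \<int>"
  shows "Digamma (1 - z) - Digamma z = of_real pi * cot (of_real pi * z)"
proof -
  have z: "z \<notin> \<int>\<^sub>\<le>\<^sub>0" "1 - z \<notin> \<int>\<^sub>\<le>\<^sub>0"
    using assms nonpos_Ints_subset_Ints Ints_diff[of 1 "1 - z"] by auto
  have s: "sin (of_real pi * z) \<noteq> 0"
    using assms by (subst sin_eq_0) auto
  have "((\<lambda>w. Gamma w * Gamma (1 - w)) has_field_derivative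
          Gamma z * Gamma (1 - z) * (Digamma z - Digamma (1 - z))) (at z)"
    using z by (auto intro!: derivative_eq_intros simp: algebra_simps)
  moreover have "((\<lambda>w. Gamma w * Gamma (1 - w)) has_field_derivative
          - (of_real pi * (cos (of_real pi * z) * of_real pi)) / (sin (of_real pi * z))\<^sup>2) (at z)"
    unfolding Gamma_reflection_complex
    using s by (auto intro!: derivative_eq_intros simp: power2_eq_square)
  ultimately have eq: "of_real pi / sin (of_real pi * z) * (Digamma z - Digamma (1 - z))
      = - (of_real pi * (cos (of_real pi * z) * of_real pi)) / (sin (of_real pi * z))\<^sup>2"
    unfolding Gamma_reflection_complex by (rule DERIV_unique)
  have "Digamma z - Digamma (1 - z)
      = sin (of_real pi * z) / of_real pi * (of_real pi / sin (of_real pi * z) * (Digamma z - Digamma (1 - z)))"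
    using s by simp
  also have "\<dots> = - of_real pi * cos (of_real pi * z) / sin (of_real pi * z)"
    unfolding eq using s by (simp add: field_simps power2_eq_square)
  finally show ?thesis
    by (simp add: cot_def algebra_simps)
qed

lemma sums_Digamma_minus_Digamma:
  fixes z :: complex
  assumes "z \<noteq> 0"
  shows "(\<lambda>k. inverse (z + of_nat k) - inverse (- z + of_nat k)) sums (Digamma (- z) - Digamma z)"
proof -
  have "(\<lambda>k. inverse (of_nat (Suc k)) - inverse (w + of_nat k)) sums (Digamma w + euler_mascheroni)"
    if "w \<noteq> 0" for w :: complex
    using summable_sums[OF summable_Digamma[OF that]] by (simp add: Digamma_def)
  from sums_diff[OF this[of "- z"] this[of z]] show ?thesis
    using assms by (simp add: algebra_simps)
qed

lemma Digamma_minus_Digamma_imaginary: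
  assumes t: "t > 0"
  shows "Digamma (- (\<i> * of_real (t / pi))) - Digamma (\<i> * of_real (t / pi))
           = - \<i> * of_real (pi * (cosh t / sinh t + 1 / t))"
proof -
  define z where "z = \<i> * complex_of_real (t / pi)"
  have "z \<noteq> 0"
    using t by (simp add: z_def)
  have "z \<notin> \<int>"
  proof
    assume "z \<in> \<int>"
    then have "Im z = 0"
      by (auto elim: Ints_cases)
    with t show False
      by (simp add: z_def)
  qed
  have cot: "cot (complex_of_real pi * z) = - \<i> * of_real (cosh t / sinh t)"
    using t by (simp add: z_def cot_def cos_conv_cosh sin_conv_sinh sinh_of_real cosh_of_real field_simps)
  have "Digamma (- z) - Digamma z = (Digamma (1 - z) - Digamma z) + 1 / z"
    using Digamma_plus1[of "- z"] \<open>z \<noteq> 0\<close> by (simp add: algebra_simps)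
  also have "\<dots> = - \<i> * of_real (pi * (cosh t / sinh t + 1 / t))"
    unfolding Digamma_reflection[OF \<open>z \<notin> \<int>\<close>] cot using t by (simp add: z_def field_simps)
  finally show ?thesis
    unfolding z_def .
qed

lemma sums_lorentzian_nat:
  assumes t: "t > 0"
  shows "(\<lambda>k. lorentzian t (real k)) sums ((cosh t / sinh t + 1 / t) / (2 * t))"
proof -
  define z where "z = \<i> * complex_of_real (t / pi)"
  have "z \<noteq> 0"
    using t by (simp add: z_def)
  have "inverse (z + of_nat k) - inverse (- z + of_nat k)
          = - \<i> * of_real (2 * pi * t * lorentzian t (real k))" for k
  proof -
    have nz: "z + of_nat k \<noteq> 0" "- z + of_nat k \<noteq> 0" "t\<^sup>2 + pi\<^sup>2 * (real k)\<^sup>2 \<noteq> 0"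
      using t lorentzian_denominator_pos[of t "real k"] by (auto simp: z_def complex_eq_iff)
    have "inverse (z + of_nat k) - inverse (- z + of_nat k) = - 2 * z / ((of_nat k)\<^sup>2 - z\<^sup>2)"
      using nz by (simp add: field_simps power2_eq_square)
    also have "\<dots> = - \<i> * of_real (2 * pi * t * lorentzian t (real k))"
      using nz t by (simp add: z_def lorentzian_def field_simps power2_eq_square complex_eq_iff)
    finally show ?thesis .
  qed
  with sums_Digamma_minus_Digamma[OF \<open>z \<noteq> 0\<close>] Digamma_minus_Digamma_imaginary[OF t]
  have "(\<lambda>k. - \<i> * of_real (2 * pi * t * lorentzian t (real k)))
          sums (- \<i> * of_real (pi * (cosh t / sinh t + 1 / t)))"
    by (simp add: z_def)
  from sums_mult[OF this, of \<i>]
  have "(\<lambda>k. of_real (2 * pi * t * lorentzian t (real k)))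
          sums (of_real (pi * (cosh t / sinh t + 1 / t)) :: complex)"
    by simp
  then have "(\<lambda>k. 2 * pi * t * lorentzian t (real k)) sums (pi * (cosh t / sinh t + 1 / t))"
    by (simp only: sums_of_real_iff)
  from sums_divide[OF this, of "2 * pi * t"] show ?thesis
    using t by simp
qed

section \<open>Sums over the nonzero integers\<close>

lemma has_sum_int_nonzero_split:
  fixes f :: "int \<Rightarrow> 'a::topological_comm_monoid_add"
  assumes "(f has_sum a) {1..}" "(f has_sum b) {..-1}"
  shows "(f has_sum (a + b)) (UNIV - {0})"
proof -
  have "(f has_sum (a + b)) ({1..} \<union> {..-1})"
    by (rule has_sum_Un_disjoint[OF assms]) auto
  also have "{1..} \<union> {..-1::int} = UNIV - {0}"
    by auto
  finally show ?thesis .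
qed

lemma has_sum_pos_int_iff:
  "((\<lambda>j. f (int j + 1)) has_sum s) UNIV \<longleftrightarrow> (f has_sum s) {1..}"
  by (rule has_sum_reindex_bij_witness[where i = "\<lambda>k. nat (k - 1)" and j = "\<lambda>j. int j + 1"]) auto

lemma has_sum_neg_int_iff:
  "((\<lambda>j. f (- int j - 1)) has_sum s) UNIV \<longleftrightarrow> (f has_sum s) {..-1}"
  by (rule has_sum_reindex_bij_witness[where i = "\<lambda>k. nat (- k - 1)" and j = "\<lambda>j. - int j - 1"]) auto

lemma has_sum_int_nonzero_of_pairs:
  fixes f :: "int \<Rightarrow> 'a::banach"
  assumes "summable (\<lambda>j. norm (f (int j + 1)))" "summable (\<lambda>j. norm (f (- int j - 1)))"
    and "(\<lambda>j. f (int j + 1) + f (- int j - 1)) sums s"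
  shows "(f has_sum s) (UNIV - {0})"
proof -
  have pos: "(\<lambda>j. f (int j + 1)) sums (\<Sum>j. f (int j + 1))"
    and neg: "(\<lambda>j. f (- int j - 1)) sums (\<Sum>j. f (- int j - 1))"
    using assms(1,2) by (auto intro!: summable_sums summable_norm_cancel)
  have "(f has_sum (\<Sum>j. f (int j + 1))) {1..}" "(f has_sum (\<Sum>j. f (- int j - 1))) {..-1}"
    using norm_summable_imp_has_sum[OF assms(1) pos] norm_summable_imp_has_sum[OF assms(2) neg]
    by (simp_all add: has_sum_pos_int_iff has_sum_neg_int_iff)
  moreover have "s = (\<Sum>j. f (int j + 1)) + (\<Sum>j. f (- int j - 1))"
    using sums_unique2[OF assms(3) sums_add[OF pos neg]] .
  ultimately show ?thesis
    by (simp add: has_sum_int_nonzero_split)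
qed

lemma sums_pairs_of_has_sum_int_nonzero:
  fixes f :: "int \<Rightarrow> 'a::banach"
  assumes "(f has_sum s) (UNIV - {0})"
  shows "(\<lambda>j. f (int j + 1) + f (- int j - 1)) sums s"
proof -
  have "f summable_on {1..}" "f summable_on {..-1}"
    using assms by (auto intro: summable_on_subset_banach has_sum_imp_summable)
  then have pos: "(f has_sum infsum f {1..}) {1..}" and neg: "(f has_sum infsum f {..-1}) {..-1}"
    by (auto intro: has_sum_infsum)
  have "s = infsum f {1..} + infsum f {..-1}"
    using has_sum_unique[OF assms has_sum_int_nonzero_split[OF pos neg]] .
  with sums_add[OF has_sum_imp_sums[OF pos[folded has_sum_pos_int_iff]]
                   has_sum_imp_sums[OF neg[folded has_sum_neg_int_iff]]]
  show ?thesis by simp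
qed

lemma has_sum_lorentzian_int:
  assumes t: "t > 0"
  shows "((\<lambda>k::int. lorentzian t (of_int k)) has_sum (cosh t / (t * sinh t))) UNIV"
proof -
  define A where "A = (cosh t / sinh t + 1 / t) / (2 * t)"
  have pos: "(\<lambda>j. lorentzian t (real j + 1)) sums (A - lorentzian t 0)"
    using sums_lorentzian_nat[OF t] sums_Suc_iff[of "\<lambda>k. lorentzian t (real k)"]
    by (simp add: A_def add.commute)
  have "((\<lambda>k::int. lorentzian t (of_int k)) has_sum 2 * (A - lorentzian t 0)) (UNIV - {0})"
  proof (rule has_sum_int_nonzero_of_pairs)
    have neg: "lorentzian t (- x - 1) = lorentzian t (x + 1)" for x
      using lorentzian_minus[of t "x + 1"] by simp
    show "summable (\<lambda>j. norm (lorentzian t (of_int (int j + 1))))"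
      "summable (\<lambda>j. norm (lorentzian t (of_int (- int j - 1))))"
      using sums_summable[OF pos] by (simp_all add: neg lorentzian_nonneg)
    show "(\<lambda>j. lorentzian t (of_int (int j + 1)) + lorentzian t (of_int (- int j - 1)))
            sums (2 * (A - lorentzian t 0))"
      using sums_mult[OF pos, of 2] by (simp add: neg)
  qed
  from has_sum_insert[OF _ this] have "((\<lambda>k. lorentzian t (of_int k))
      has_sum (lorentzian t 0 + 2 * (A - lorentzian t 0))) UNIV"
    by (simp add: insert_UNIV)
  moreover have "lorentzian t 0 + 2 * (A - lorentzian t 0) = cosh t / (t * sinh t)"
    using t by (simp add: A_def lorentzian_def field_simps power2_eq_square)
  ultimately show ?thesis
    by simp
qed

lemma sums_lorentzian_pairs:
  assumes "t > 0"
  shows "(\<lambda>j. lorentzian t (of_int n - (real j + 1)) + lorentzian t (of_int n + (real j + 1)))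
           sums (cosh t / (t * sinh t) - lorentzian t (of_int n))"
proof -
  have "((\<lambda>k. lorentzian t (of_int (n + k))) has_sum (cosh t / (t * sinh t))) UNIV"
    using has_sum_lorentzian_int[OF assms]
    by (subst has_sum_reindex_bij_witness[where i = "\<lambda>k. k - n" and j = "\<lambda>k. n + k"]) auto
  from has_sum_Diff[OF this has_sum_finiteI[of "{0}"]]
  have "((\<lambda>k. lorentzian t (of_int (n + k))) has_sum
          (cosh t / (t * sinh t) - lorentzian t (of_int n))) (UNIV - {0})"
    by simp
  from sums_pairs_of_has_sum_int_nonzero[OF this] show ?thesis
    by (simp add: algebra_simps)
qed

section \<open>Telescoping pair sums of odd functions\<close>

lemma sums_shift_telescope:
  fixes w :: "nat \<Rightarrow> 'a::real_normed_vector"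
  assumes "w \<longlonglongrightarrow> 0"
  shows "(\<lambda>j. w (j + d) - w j) sums (- (\<Sum>i<d. w i))"
proof -
  have "(\<lambda>j. w (Suc (j + i)) - w (j + i)) sums (0 - w i)" for i
    using telescope_sums[OF LIMSEQ_ignore_initial_segment[OF assms, of i]] by simp
  then have "(\<lambda>j. \<Sum>i<d. w (Suc (j + i)) - w (j + i)) sums (\<Sum>i<d. 0 - w i)"
    by (rule sums_sum)
  moreover have "(\<Sum>i<d. w (Suc (j + i)) - w (j + i)) = w (j + d) - w j" for j
    using sum_lessThan_telescope[of "\<lambda>i. w (j + i)" d] by simp
  ultimately show ?thesis
    by (simp add: sum_negf)
qed

lemma sum_odd_fun_shifted:
  fixes u :: "real \<Rightarrow> 'a::real_vector"
  assumes odd: "\<And>x. u (- x) = - u x"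
  shows "(\<Sum>i<2 * d. u (real i + 1 - real d)) = u (real d)"
proof (induction d)
  case 0
  have "2 *\<^sub>R u 0 = 0"
    using odd[of 0] by (simp add: scaleR_2 eq_neg_iff_add_eq_0)
  then show ?case
    by simp
next
  case (Suc d)
  have "(\<Sum>i<2 * Suc d. u (real i + 1 - real (Suc d)))
          = (\<Sum>i<Suc (2 * d). u (real i - real d)) + u (real d + 1)"
    by (simp add: algebra_simps)
  also have "(\<Sum>i<Suc (2 * d). u (real i - real d))
          = u (- real d) + (\<Sum>i<2 * d. u (real i + 1 - real d))"
    by (subst sum.lessThan_Suc_shift) (simp add: algebra_simps)
  finally show ?case
    using Suc.IH odd[of "real d"] by (simp add: add.commute)
qed

lemma sums_odd_fun_pairs:
  fixes u :: "real \<Rightarrow> 'a::real_normed_vector"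
  assumes odd: "\<And>x. u (- x) = - u x" and lim: "(u \<longlongrightarrow> 0) at_top"
  shows "(\<lambda>j. u (of_int n - (real j + 1)) + u (of_int n + (real j + 1))) sums (- u (of_int n))"
proof -
  have nat_case: "(\<lambda>j. u (real d - (real j + 1)) + u (real d + (real j + 1))) sums (- u (real d))"
    for d :: nat
  proof -
    define w where "w i = u (real i + 1 - real d)" for i
    have "w \<longlonglongrightarrow> 0"
      unfolding w_def by (rule filterlim_compose[OF lim]) real_asymp
    from sums_shift_telescope[OF this, of "2 * d"]
    have "(\<lambda>j. w (j + 2 * d) - w j) sums (- u (real d))"
      unfolding w_def sum_odd_fun_shifted[of u, OF odd] .
    moreover have "w (j + 2 * d) - w j = u (real d - (real j + 1)) + u (real d + (real j + 1))" for j
      using odd[of "real j + 1 - real d"] by (simp add: w_def algebra_simps)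
    ultimately show ?thesis
      by simp
  qed
  show ?thesis
  proof (cases "n \<ge> 0")
    case True
    then show ?thesis
      using nat_case[of "nat n"] by simp
  next
    case False
    define d where "d = nat (- n)"
    have n: "of_int n = - real d"
      using False by (simp add: d_def)
    have "(\<lambda>j. - (u (real d - (real j + 1)) + u (real d + (real j + 1)))) sums (- (- u (real d)))"
      by (rule sums_minus[OF nat_case])
    moreover have "u (of_int n - (real j + 1)) + u (of_int n + (real j + 1))
        = - (u (real d - (real j + 1)) + u (real d + (real j + 1)))" for j
    proof -
      have minus: "of_int n - (real j + 1) = - (real d + (real j + 1))"
        and plus: "of_int n + (real j + 1) = - (real d - (real j + 1))"
        by (simp_all add: n)
      show ?thesis
        unfolding minus plus odd by simp
    qed
    moreover have "- (- u (real d)) = - u (of_int n)"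
      using odd[of "real d"] by (simp add: n)
    ultimately show ?thesis
      by simp
  qed
qed

lemma lorentzian_difference_quotient:
  assumes "t \<noteq> 0" "m \<noteq> 0"
  shows "(lorentzian t (x - m) - lorentzian t (x + m)) / m
    = pi\<^sup>2 * lorentzian t x * (x * (lorentzian t (x - m) + lorentzian t (x + m))
        + ((x - m) * lorentzian t (x - m) + (x + m) * lorentzian t (x + m)))"
proof -
  define A B X where "A = t\<^sup>2 + pi\<^sup>2 * (x - m)\<^sup>2" and "B = t\<^sup>2 + pi\<^sup>2 * (x + m)\<^sup>2"
    and "X = t\<^sup>2 + pi\<^sup>2 * x\<^sup>2"
  have nz: "A \<noteq> 0" "B \<noteq> 0" "X \<noteq> 0"
    unfolding A_def B_def X_def using lorentzian_denominator_pos assms(1) by (metis less_irrefl)+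
  have eq: "(B - A) * X = pi\<^sup>2 * m * (x * (B + A) + (x - m) * B + (x + m) * A)"
    unfolding A_def B_def X_def by algebra
  have L: "lorentzian t (x - m) = 1 / A" "lorentzian t (x + m) = 1 / B" "lorentzian t x = 1 / X"
    by (simp_all add: lorentzian_def A_def B_def X_def)
  show ?thesis
    unfolding L using nz eq assms(2) by (simp add: divide_simps)
qed

definition calC_integrand :: "int \<Rightarrow> real \<Rightarrow> real" where
  "calC_integrand k t = t * sinh t * lorentzian t (of_int k)"

definition calD_deriv :: "int \<Rightarrow> real \<Rightarrow> real" where
  "calD_deriv n t = pi * of_int n * lorentzian t (of_int n)
                      * (cosh t - 2 * t * sinh t * lorentzian t (of_int n))"

lemma sums_calC_integrand_pairs:
  assumes t: "t > 0"
  shows "(\<lambda>j. (calC_integrand (n - (int j + 1)) t - calC_integrand (n + (int j + 1)) t) / (real j + 1))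
           sums (pi * calD_deriv n t)"
proof -
  define N where "N = real_of_int n"
  define L where "L x = lorentzian t x" for x
  define m where "m j = real j + 1" for j :: nat
  define G where "G j = L (N - m j) + L (N + m j)" for j
  define U where "U j = (N - m j) * L (N - m j) + (N + m j) * L (N + m j)" for j
  define c where "c = t * sinh t * pi\<^sup>2 * L N"
  have "G sums (cosh t / (t * sinh t) - L N)"
    using sums_lorentzian_pairs[OF t, of n] by (simp add: G_def[abs_def] L_def N_def m_def)
  moreover have "U sums (- (N * L N))"
  proof -
    have "((\<lambda>x. x * L x) \<longlongrightarrow> 0) at_top"
      unfolding L_def lorentzian_def by real_asymp
    then show ?thesis
      using sums_odd_fun_pairs[of "\<lambda>x. x * L x" n] by (simp add: U_def[abs_def] L_def N_def m_def)
  qed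
  ultimately have "(\<lambda>j. c * (N * G j + U j)) sums (c * (N * (cosh t / (t * sinh t) - L N) + - (N * L N)))"
    by (intro sums_mult sums_add)
  moreover have "c * (N * (cosh t / (t * sinh t) - L N) + - (N * L N)) = pi * calD_deriv n t"
    using t by (simp add: c_def calD_deriv_def N_def L_def field_simps power2_eq_square)
  moreover have "(calC_integrand (n - (int j + 1)) t - calC_integrand (n + (int j + 1)) t) / (real j + 1)
      = c * (N * G j + U j)" for j
  proof -
    have "(calC_integrand (n - (int j + 1)) t - calC_integrand (n + (int j + 1)) t) / (real j + 1)
        = t * sinh t * ((L (N - m j) - L (N + m j)) / m j)"
      by (simp add: calC_integrand_def L_def N_def m_def right_diff_distrib)
    also have "\<dots> = c * (N * G j + U j)"
      unfolding L_def c_def G_def U_def using lorentzian_difference_quotient[of t "m j" N] t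
      by (simp add: m_def mult.assoc)
    finally show ?thesis .
  qed
  ultimately show ?thesis
    by simp
qed

lemma calD_altdef: "calD n t = pi * of_int n * sinh t * lorentzian t (of_int n)"
proof (cases "n = 0")
  case False
  then have "t\<^sup>2 + pi\<^sup>2 * (of_int n)\<^sup>2 > 0"
    by (intro lorentzian_denominator_pos) simp
  with False show ?thesis
    by (simp add: calD_def lorentzian_def field_simps power2_eq_square)
qed (simp add: calD_def)

lemma has_real_derivative_calD: "(calD n has_real_derivative calD_deriv n t) (at t)"
proof (cases "n = 0")
  case True
  then have "calD n = (\<lambda>_. 0)"
    by (simp add: calD_def fun_eq_iff)
  with True show ?thesis
    by (simp add: calD_deriv_def)
next
  case False
  then have pos: "x\<^sup>2 + pi\<^sup>2 * (of_int n)\<^sup>2 > 0" for x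
    by (intro lorentzian_denominator_pos) simp
  have "calD n = (\<lambda>t. pi * of_int n * sinh t / (t\<^sup>2 + pi\<^sup>2 * (of_int n)\<^sup>2))"
    by (simp add: fun_eq_iff calD_altdef lorentzian_def)
  then show ?thesis
    using pos[of t]
    by (auto intro!: derivative_eq_intros simp: calD_deriv_def lorentzian_def field_simps power2_eq_square)
qed

lemma has_integral_calD_deriv:
  assumes "0 \<le> y"
  shows "(calD_deriv n has_integral calD n y) {0..y}"
proof -
  have "(calD_deriv n has_integral calD n y - calD n 0) {0..y}"
    using assms has_real_derivative_calD
    by (intro fundamental_theorem_of_calculus)
       (auto simp: has_real_derivative_iff_has_vector_derivative[symmetric] intro: has_field_derivative_at_within)
  then show ?thesis
    by (simp add: calD_altdef)
qed

section \<open>Bounds on the integrands\<close>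

lemma sinh_le_mult_cosh:
  fixes t :: real
  assumes "0 \<le> t"
  shows "sinh t \<le> t * cosh t"
proof -
  have "0 * cosh 0 - sinh 0 \<le> t * cosh t - sinh (t :: real)"
  proof (rule DERIV_nonneg_imp_nondecreasing[OF assms, where f = "\<lambda>x. x * cosh x - sinh x"])
    fix x :: real
    assume "0 \<le> x"
    then show "\<exists>d. ((\<lambda>x. x * cosh x - sinh x) has_real_derivative d) (at x) \<and> d \<ge> 0"
      by (intro exI[of _ "x * sinh x"]) (auto intro!: derivative_eq_intros)
  qed
  then show ?thesis
    by simp
qed

definition sinhc :: "real \<Rightarrow> real" where
  "sinhc t = (if t = 0 then 1 else sinh t / t)"

lemma isCont_sinhc: "isCont sinhc t"
proof (cases "t = 0")
  case True
  have "((\<lambda>x. sinh x / x) \<longlongrightarrow> 1) (at (0::real))"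
    by real_asymp
  then have "(sinhc \<longlongrightarrow> 1) (at 0)"
    by (rule Lim_transform_eventually) (auto simp: sinhc_def eventually_at_filter)
  with True show ?thesis
    by (simp add: isCont_def sinhc_def)
next
  case False
  have "eventually (\<lambda>x. x \<noteq> 0) (nhds t)"
    using False by (intro t1_space_nhds)
  then have "eventually (\<lambda>x. sinh x / x = sinhc x) (nhds t)"
    by eventually_elim (simp add: sinhc_def)
  moreover have "isCont (\<lambda>x. sinh x / x) t"
    using False by (auto intro!: continuous_intros)
  ultimately show ?thesis
    by (simp add: isCont_cong)
qed

lemma calC_eq_integral: "calC k y = integral {0..y} (calC_integrand k)"
  by (simp add: calC_def calC_integrand_def[abs_def] lorentzian_def)

lemma calC_integrand_integrable: "calC_integrand k integrable_on {a..b}"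
proof (cases "k = 0")
  case True
  have "sinhc integrable_on {a..b}"
    by (intro integrable_continuous_real continuous_at_imp_continuous_on ballI isCont_sinhc)
  moreover have "calC_integrand k t = sinhc t" if "t \<in> {a..b} - {0}" for t
    using that True by (simp add: sinhc_def calC_integrand_def lorentzian_def power2_eq_square)
  ultimately show ?thesis
    using integrable_spike_finite[of "{0}" "{a..b}" "calC_integrand k" sinhc] by simp
next
  case False
  then have "t\<^sup>2 + pi\<^sup>2 * (of_int k)\<^sup>2 \<noteq> 0" for t
    using lorentzian_denominator_pos[of t "of_int k"] by simp
  then have "continuous_on {a..b} (calC_integrand k)"
    by (auto simp: calC_integrand_def lorentzian_def intro!: continuous_intros)
  then show ?thesis
    by (rule integrable_continuous_real)
qed

definition calC_integrand_bound :: "real \<Rightarrow> int \<Rightarrow> real" where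
  "calC_integrand_bound y k = (if k = 0 then cosh y else y * sinh y / (pi\<^sup>2 * (of_int k)\<^sup>2))"

lemma calC_integrand_bound_minus [simp]: "calC_integrand_bound y (- k) = calC_integrand_bound y k"
  by (simp add: calC_integrand_bound_def)

lemma calC_integrand_bounds:
  assumes "0 \<le> t" "t \<le> y"
  shows "0 \<le> calC_integrand k t" "calC_integrand k t \<le> calC_integrand_bound y k"
proof -
  show "0 \<le> calC_integrand k t"
    using assms by (simp add: calC_integrand_def lorentzian_nonneg)
  show "calC_integrand k t \<le> calC_integrand_bound y k"
  proof (cases "k = 0")
    case True
    have "calC_integrand k t \<le> cosh t"
    proof (cases "t = 0")
      case False
      then have "calC_integrand k t = sinh t / t"
        using True by (simp add: calC_integrand_def lorentzian_def power2_eq_square)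
      also have "\<dots> \<le> cosh t"
        using sinh_le_mult_cosh[of t] assms False by (simp add: divide_le_eq mult.commute)
      finally show ?thesis .
    qed (simp add: calC_integrand_def)
    also have "\<dots> \<le> cosh y"
      using assms cosh_real_nonneg_le_iff[of t y] by simp
    finally show ?thesis
      using True by (simp add: calC_integrand_bound_def)
  next
    case False
    then have k: "pi\<^sup>2 * (of_int k)\<^sup>2 > 0"
      by simp
    have "calC_integrand k t \<le> t * sinh t / (pi\<^sup>2 * (of_int k)\<^sup>2)"
      unfolding calC_integrand_def lorentzian_def times_divide_eq_right mult_1_right using assms k
      by (intro divide_left_mono) (auto intro!: mult_pos_pos add_nonneg_pos)
    also have "\<dots> \<le> y * sinh y / (pi\<^sup>2 * (of_int k)\<^sup>2)"
      using assms k by (intro divide_right_mono mult_mono) auto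
    finally show ?thesis
      using False by (simp add: calC_integrand_bound_def)
  qed
qed

lemma abs_calC_le:
  assumes "0 \<le> y"
  shows "\<bar>calC k y\<bar> \<le> y * calC_integrand_bound y k"
proof -
  have "0 \<le> calC k y"
    unfolding calC_eq_integral
    by (rule integral_nonneg[OF calC_integrand_integrable]) (use calC_integrand_bounds in auto)
  moreover have "calC k y \<le> integral {0..y} (\<lambda>t. calC_integrand_bound y k)"
    unfolding calC_eq_integral
    by (rule integral_le[OF calC_integrand_integrable]) (use calC_integrand_bounds in auto)
  ultimately show ?thesis
    using assms by simp
qed

lemma summable_calC_integrand_bound: "summable (\<lambda>j::nat. calC_integrand_bound y (k + int j))"
proof -
  define d where "d = nat \<bar>k\<bar> + 1"
  have "summable (\<lambda>j. calC_integrand_bound y (k + int (j + d)))"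
  proof (rule summable_comparison_test')
    have "summable (\<lambda>j::nat. inverse (real (Suc j) ^ 2))"
      using inverse_power_summable[of 2, where 'a = real] by (subst summable_Suc_iff) simp
    then show "summable (\<lambda>j::nat. \<bar>y * sinh y\<bar> / pi\<^sup>2 * inverse (real (Suc j) ^ 2))"
      by (rule summable_mult)
  next
    fix j :: nat
    define D where "D = real_of_int (k + int (j + d))"
    have D: "real j + 1 \<le> D"
      by (simp add: D_def d_def)
    then have "norm (calC_integrand_bound y (k + int (j + d))) = \<bar>y * sinh y\<bar> / (pi\<^sup>2 * D\<^sup>2)"
      by (auto simp: calC_integrand_bound_def D_def abs_divide)
    also have "\<dots> \<le> \<bar>y * sinh y\<bar> / (pi\<^sup>2 * (real j + 1)\<^sup>2)"
      using D by (intro divide_left_mono mult_left_mono power_mono) auto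
    also have "\<dots> = \<bar>y * sinh y\<bar> / pi\<^sup>2 * inverse (real (Suc j) ^ 2)"
      by (simp add: divide_inverse add.commute)
    finally show "norm (calC_integrand_bound y (k + int (j + d)))
        \<le> \<bar>y * sinh y\<bar> / pi\<^sup>2 * inverse (real (Suc j) ^ 2)" .
  qed
  then show ?thesis
    by (rule summable_iff_shift[THEN iffD1])
qed

lemma summable_calC_integrand_bound_minus: "summable (\<lambda>j::nat. calC_integrand_bound y (k - int j))"
proof -
  have "calC_integrand_bound y (k - int j) = calC_integrand_bound y (- k + int j)" for j
    using calC_integrand_bound_minus[of y "k - int j"] by simp
  then show ?thesis
    using summable_calC_integrand_bound[of y "- k"] by simp
qed

lemma summable_abs_calC:
  assumes "0 \<le> y"
  shows "summable (\<lambda>j::nat. \<bar>calC (k + int j) y\<bar>)" "summable (\<lambda>j::nat. \<bar>calC (k - int j) y\<bar>)"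
proof -
  show "summable (\<lambda>j::nat. \<bar>calC (k + int j) y\<bar>)"
    by (rule summable_comparison_test'[OF summable_mult[OF summable_calC_integrand_bound[of y k], of y]])
       (simp add: abs_calC_le[OF assms])
  show "summable (\<lambda>j::nat. \<bar>calC (k - int j) y\<bar>)"
    by (rule summable_comparison_test'[OF summable_mult[OF summable_calC_integrand_bound_minus[of y k], of y]])
       (simp add: abs_calC_le[OF assms])
qed

section \<open>Term-by-term integration\<close>

lemma abs_divide_le_abs:
  fixes x d :: real
  assumes "1 \<le> \<bar>d\<bar>"
  shows "\<bar>x / d\<bar> \<le> \<bar>x\<bar>"
  using assms by (simp add: divide_le_eq mult_le_cancel_left1)

lemma sums_integral_of_dominated_series:
  fixes p :: "nat \<Rightarrow> real \<Rightarrow> real"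
  assumes "a \<le> b"
    and int: "\<And>j. (p j has_integral I j) {a..b}"
    and bound: "\<And>j x. x \<in> {a..b} \<Longrightarrow> \<bar>p j x\<bar> \<le> M j" and "summable M"
    and lim: "\<And>x. x \<in> {a..b} \<Longrightarrow> (\<lambda>j. p j x) sums g x"
  shows "I sums integral {a..b} g"
proof -
  have "M j \<ge> 0" for j
    using bound[of a j] \<open>a \<le> b\<close> by force
  have "(\<lambda>N. integral {a..b} (\<lambda>x. \<Sum>j<N. p j x)) \<longlonglongrightarrow> integral {a..b} g"
  proof (rule dominated_convergence(2))
    show "(\<lambda>x. \<Sum>j<N. p j x) integrable_on {a..b}" for N
      using int by (auto intro: integrable_sum has_integral_integrable)
    show "(\<lambda>x. suminf M) integrable_on {a..b}"
      by (rule integrable_const_ivl)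
    show "norm (\<Sum>j<N. p j x) \<le> suminf M" if "x \<in> {a..b}" for N x
    proof -
      have "norm (\<Sum>j<N. p j x) \<le> (\<Sum>j<N. M j)"
        using bound[OF that] by (intro order_trans[OF norm_sum sum_mono]) simp
      also have "\<dots> \<le> suminf M"
        using \<open>summable M\<close> \<open>\<And>j. M j \<ge> 0\<close> by (intro sum_le_suminf) auto
      finally show ?thesis .
    qed
    show "(\<lambda>N. \<Sum>j<N. p j x) \<longlonglongrightarrow> g x" if "x \<in> {a..b}" for x
      using lim[OF that] by (simp add: sums_def)
  qed
  moreover have "integral {a..b} (\<lambda>x. \<Sum>j<N. p j x) = (\<Sum>j<N. I j)" for N
    using integral_unique[OF int] has_integral_integrable[OF int] by (simp add: integral_sum)
  ultimately show ?thesis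
    by (simp add: sums_def)
qed

lemma sums_calC_pairs:
  assumes y: "y > 0"
  shows "(\<lambda>j. (calC (n - (int j + 1)) y - calC (n + (int j + 1)) y) / (real j + 1)) sums (pi * calD n y)"
proof -
  define p where "p j t = (calC_integrand (n - (int j + 1)) t - calC_integrand (n + (int j + 1)) t) / (real j + 1)"
    for j t
  define M where "M j = calC_integrand_bound y (n - (int j + 1)) + calC_integrand_bound y (n + (int j + 1))"
    for j
  \<comment> \<open>At \<open>t = 0\<close> every integrand vanishes, while \<open>calD_deriv n 0\<close> need not.\<close>
  define g where "g t = (if t = 0 then 0 else pi * calD_deriv n t)" for t
  have "(\<lambda>j. (calC (n - (int j + 1)) y - calC (n + (int j + 1)) y) / (real j + 1)) sums integral {0..y} g"
  proof (rule sums_integral_of_dominated_series[where p = p and M = M])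
    show "(p j has_integral (calC (n - (int j + 1)) y - calC (n + (int j + 1)) y) / (real j + 1)) {0..y}" for j
      unfolding p_def calC_eq_integral
      by (intro has_integral_divide has_integral_diff integrable_integral calC_integrand_integrable)
    show "\<bar>p j t\<bar> \<le> M j" if "t \<in> {0..y}" for j t
    proof -
      have "\<bar>p j t\<bar> \<le> \<bar>calC_integrand (n - (int j + 1)) t - calC_integrand (n + (int j + 1)) t\<bar>"
        unfolding p_def by (rule abs_divide_le_abs) simp
      also have "\<dots> \<le> M j"
        using calC_integrand_bounds[of t y "n - (int j + 1)"] calC_integrand_bounds[of t y "n + (int j + 1)"] that
        unfolding M_def by (simp add: abs_le_iff)
      finally show ?thesis .
    qed
    show "summable M"
      unfolding M_def
      using summable_add[OF summable_calC_integrand_bound_minus[of y "n - 1"]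
                            summable_calC_integrand_bound[of y "n + 1"]]
      by (simp add: algebra_simps)
    show "(\<lambda>j. p j t) sums g t" if "t \<in> {0..y}" for t
      using sums_calC_integrand_pairs[of t n] that by (cases "t = 0") (auto simp: p_def g_def calC_integrand_def)
  qed (use y in auto)
  moreover have "((\<lambda>t. pi * calD_deriv n t) has_integral pi * calD n y) {0..y}"
    using has_integral_mult_right[OF has_integral_calD_deriv[of y n], of pi] y by simp
  then have "(g has_integral pi * calD n y) {0..y}"
    by (rule has_integral_spike_finite[where S = "{0}", rotated 2]) (auto simp: g_def)
  ultimately show ?thesis
    by (simp add: integral_unique)
qed

definition hilbert_term :: "int \<Rightarrow> real \<Rightarrow> int \<Rightarrow> real" where
  "hilbert_term n y m = (1 / pi) * (calC (n - m) y / of_int m)"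

lemma abs_hilbert_term_le:
  assumes "m \<noteq> 0"
  shows "\<bar>hilbert_term n y m\<bar> \<le> \<bar>calC (n - m) y\<bar>"
proof -
  have "1 \<le> \<bar>real_of_int m\<bar>"
    using assms by (simp flip: of_int_abs)
  then have "1 \<le> \<bar>pi * of_int m\<bar>"
    using mult_mono[of 1 pi 1 "\<bar>of_int m\<bar>"] pi_gt3 by (simp add: abs_mult)
  then show ?thesis
    using abs_divide_le_abs[of "pi * of_int m" "calC (n - m) y"] by (simp add: hilbert_term_def)
qed

lemma summable_norm_hilbert_term:
  assumes "0 \<le> y"
  shows "summable (\<lambda>j. norm (hilbert_term n y (int j + 1)))"
    and "summable (\<lambda>j. norm (hilbert_term n y (- int j - 1)))"
proof -
  show "summable (\<lambda>j. norm (hilbert_term n y (int j + 1)))"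
  proof (rule summable_comparison_test'[OF summable_abs_calC(2)[OF assms, of "n - 1"]])
    show "norm (norm (hilbert_term n y (int j + 1))) \<le> \<bar>calC (n - 1 - int j) y\<bar>" for j
      using abs_hilbert_term_le[of "int j + 1" n y] by (simp add: algebra_simps)
  qed
  show "summable (\<lambda>j. norm (hilbert_term n y (- int j - 1)))"
  proof (rule summable_comparison_test'[OF summable_abs_calC(1)[OF assms, of "n + 1"]])
    show "norm (norm (hilbert_term n y (- int j - 1))) \<le> \<bar>calC (n + 1 + int j) y\<bar>" for j
      using abs_hilbert_term_le[of "- int j - 1" n y] by (simp add: algebra_simps)
  qed
qed

lemma hilbert_term_pair:
  "hilbert_term n y (int j + 1) + hilbert_term n y (- int j - 1)
     = 1 / pi * ((calC (n - (int j + 1)) y - calC (n + (int j + 1)) y) / (real j + 1))"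
proof -
  have neg: "n - (- int j - 1) = n + (int j + 1)" "real_of_int (- int j - 1) = - (real j + 1)"
    and pos: "real_of_int (int j + 1) = real j + 1"
    by simp_all
  show ?thesis
    unfolding hilbert_term_def neg pos
    by (simp add: diff_divide_distrib right_diff_distrib divide_minus_right del: minus_add_distrib)
qed

theorem lemma3p14:
  fixes y :: real and n :: int
  assumes "y > 0"
  shows "((\<lambda>m::int. (1 / pi) * (calC (n - m) y / of_int m)) has_sum calD n y) (UNIV - {0})"
proof -
  have "(hilbert_term n y has_sum calD n y) (UNIV - {0})"
  proof (rule has_sum_int_nonzero_of_pairs)
    show "summable (\<lambda>j. norm (hilbert_term n y (int j + 1)))"
      "summable (\<lambda>j. norm (hilbert_term n y (- int j - 1)))"
      using summable_norm_hilbert_term assms by simp_all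
    show "(\<lambda>j. hilbert_term n y (int j + 1) + hilbert_term n y (- int j - 1)) sums calD n y"
      unfolding hilbert_term_pair using sums_mult[OF sums_calC_pairs[OF assms, of n], of "1 / pi"]
      by simp
  qed
  then show ?thesis
    by (simp only: hilbert_term_def[abs_def])
qed

end
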